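(* Let $m>2$ be an integer and let $K$ be a field whose characteristic does not divide $m$ and which contains the $m$-th roots of unity. Let $a\in K^*$ be an element that is not an $m$-th power in $K$, and let $b\in K^*$. Then every $K$-rational automorphism $\psi$ of $\mathbb{P}^1_K$ that maps the set of roots in $\bar K$ of $x^m-a$ onto the set of roots in $\bar K$ of $x^m-b$ is of the form $x\mapsto cx$ or $x\mapsto c/x$ for some nonzero $c\in K$. *)

theory Defs
  imports "HOL-Algebra.Algebraic_Closure_Type"
begin

text \<open>The projective line over a field: None is the point at infinity,
  Some x is the affine point x.\<close>
type_synonym 'a proj_line = "'a option"

text \<open>The K-rational automorphism of the projective line given by the matrix
  with rows (al, be) and (ga, de), entries in K, i.e. x maps to (al x + be)/(ga x + de),
  acting on the K-bar-points of the projective line (K-bar = algebraic closure).\<close>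
definition mobius :: "'k::field \<Rightarrow> 'k \<Rightarrow> 'k \<Rightarrow> 'k \<Rightarrow> 'k alg_closure proj_line \<Rightarrow> 'k alg_closure proj_line" where
  "mobius al be ga de p =
     (case p of
        None \<Rightarrow> (if ga = 0 then None else Some (to_ac al / to_ac ga))
      | Some x \<Rightarrow> (if to_ac ga * x + to_ac de = 0 then None
                   else Some ((to_ac al * x + to_ac be) / (to_ac ga * x + to_ac de))))"

end

theory Submission
  imports Defs
begin

text \<open>Let t be a root of x^m - a in the algebraic closure; t is not in K. Some other root r = \<eta> t
  satisfies every quadratic relation over K that t satisfies: either t has no such relation, or r is
  the other root of the quadratic minimal polynomial of t. For an m-th root of unity \<theta> (which lies
  in K) the quotient \<psi>(\<theta> t) / \<psi>(t) of two roots of x^m - b is an m-th root of unity, hence in K, and clearing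
  denominators turns \<psi>(\<theta> t) = \<rho> \<psi>(t) into a quadratic relation over K for t. Transferring it to r
  shows that \<psi>(\<theta> r) / \<psi>(\<theta> t) = \<zeta> does not depend on \<theta>. Thus \<psi>(\<eta> y) = \<zeta> \<psi>(y) at the at least
  three roots y = \<theta> t; this is a quadratic identity in y, so all its coefficients vanish, which
  forces al * ga = be * de = 0.\<close>

lemma exists_root_of_unity_ne_1:
  assumes "n \<ge> 2" "(of_nat n :: 'a :: alg_closed_field) \<noteq> 0"
  shows "\<exists>w::'a. w ^ n = 1 \<and> w \<noteq> 1"
proof -
  have "\<exists>x::'a. (\<Sum>k\<le>n-1. (\<lambda>_. 1) k * x ^ k) = 0"
    by (rule alg_closed) (use assms in auto)
  moreover have "{..n-1} = {..<n}" using assms by auto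
  ultimately obtain x :: 'a where sum: "(\<Sum>k<n. x ^ k) = 0" by auto
  have "x ^ n - 1 = (x - 1) * (\<Sum>k<n. x ^ k)" by (rule power_diff_1_eq)
  with sum have "x ^ n = 1" by simp
  moreover have "x \<noteq> 1" using sum assms by auto
  ultimately show ?thesis by blast
qed

lemma exists_root_of_unity_ne_1_neg_1:
  assumes "m \<ge> 3" "(of_nat m :: 'a :: alg_closed_field) \<noteq> 0"
  shows "\<exists>w::'a. w ^ m = 1 \<and> w \<noteq> 1 \<and> w \<noteq> -1"
proof (cases "even m")
  case True
  then obtain k where k: "m = 2 * k" by blast
  with assms obtain w :: 'a where w: "w ^ k = 1" "w \<noteq> 1"
    using exists_root_of_unity_ne_1[of k] by auto
  obtain t :: 'a where t: "t ^ 2 = w" using nth_root_exists[of 2 w] by auto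
  have "t ^ m = 1" using k t w by (simp add: power_mult)
  moreover have "t \<noteq> 1" "t \<noteq> -1" using t w by auto
  ultimately show ?thesis by blast
next
  case False
  obtain w :: 'a where w: "w ^ m = 1" "w \<noteq> 1"
    using exists_root_of_unity_ne_1[of m] assms by auto
  moreover have "w \<noteq> -1"
  proof
    assume "w = -1"
    with w False have "(-1::'a) = 1" by simp
    with w \<open>w = -1\<close> show False by simp
  qed
  ultimately show ?thesis by blast
qed

lemma exists_root_of_unity_ne_1_ne:
  fixes \<eta> :: "'a :: alg_closed_field"
  assumes "m \<ge> 3" "of_nat m \<noteq> (0::'a)" "\<eta> ^ m = 1" "\<eta> \<noteq> 1"
  shows "\<exists>w. w ^ m = 1 \<and> w \<noteq> 1 \<and> w \<noteq> \<eta>"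
proof (cases "\<eta>\<^sup>2 = 1")
  case True
  then have "(\<eta> - 1) * (\<eta> + 1) = 0" by (simp add: algebra_simps power2_eq_square)
  with assms(4) have "\<eta> = -1" by (simp add: eq_neg_iff_add_eq_0)
  with exists_root_of_unity_ne_1_neg_1[OF assms(1,2)] show ?thesis by blast
next
  case False
  have "(\<eta>\<^sup>2) ^ m = (\<eta> ^ m)\<^sup>2" by (simp flip: power_mult add: mult.commute)
  moreover have "\<eta>\<^sup>2 \<noteq> \<eta>" using assms(1,3,4) by (auto simp: power2_eq_square power_0_left)
  ultimately show ?thesis using False assms(3) by auto
qed

lemma three_roots_quadratic_eq_0:
  fixes c2 c1 c0 :: "'a::field"
  assumes "\<And>y. y \<in> {y1, y2, y3} \<Longrightarrow> c2 * y\<^sup>2 + c1 * y + c0 = 0"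
    and "y1 \<noteq> y2" "y1 \<noteq> y3" "y2 \<noteq> y3"
  shows "c2 = 0 \<and> c1 = 0 \<and> c0 = 0"
proof -
  have "(y1 - y2) * (c2 * (y1 + y2) + c1) = (c2 * y1\<^sup>2 + c1 * y1 + c0) - (c2 * y2\<^sup>2 + c1 * y2 + c0)"
    "(y1 - y3) * (c2 * (y1 + y3) + c1) = (c2 * y1\<^sup>2 + c1 * y1 + c0) - (c2 * y3\<^sup>2 + c1 * y3 + c0)"
    by (simp_all add: algebra_simps power2_eq_square)
  with assms have 12: "c2 * (y1 + y2) + c1 = 0" and 13: "c2 * (y1 + y3) + c1 = 0" by auto
  have "c2 * (y2 - y3) = (c2 * (y1 + y2) + c1) - (c2 * (y1 + y3) + c1)" by (simp add: algebra_simps)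
  with 12 13 assms(4) have "c2 = 0" by simp
  with 12 assms(1)[of y1] show ?thesis by simp
qed

lemma homography_scaling_at_three_points:
  fixes A B C D \<eta> \<zeta> :: "'a::field"
  assumes eq: "\<And>y. y \<in> {y1, y2, y3} \<Longrightarrow> C * y + D \<noteq> 0 \<and> C * (\<eta> * y) + D \<noteq> 0 \<and>
      (A * (\<eta> * y) + B) / (C * (\<eta> * y) + D) = \<zeta> * ((A * y + B) / (C * y + D))"
    and "y1 \<noteq> y2" "y1 \<noteq> y3" "y2 \<noteq> y3"
    and "\<eta> \<noteq> 0" "\<eta> \<noteq> 1" "A * D - B * C \<noteq> 0"
  shows "A * C = 0 \<and> B * D = 0"
proof -
  have "(A * C * \<eta> * (1 - \<zeta>)) * y\<^sup>2 + (A * \<eta> * D + B * C - \<zeta> * (A * D + B * C * \<eta>)) * y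
        + B * D * (1 - \<zeta>) = 0" if "y \<in> {y1, y2, y3}" for y
  proof -
    from eq[OF that] have "(A * (\<eta> * y) + B) * (C * y + D) = \<zeta> * ((A * y + B) * (C * (\<eta> * y) + D))"
      by (elim conjE) (simp add: field_simps)
    then show ?thesis by (simp add: algebra_simps power2_eq_square)
  qed
  then have coeffs: "A * C * \<eta> * (1 - \<zeta>) = 0" "A * \<eta> * D + B * C - \<zeta> * (A * D + B * C * \<eta>) = 0"
      "B * D * (1 - \<zeta>) = 0"
    using three_roots_quadratic_eq_0[OF _ assms(2-4)] by blast+
  have "\<zeta> \<noteq> 1"
  proof
    assume "\<zeta> = 1"
    with coeffs(2) have "(\<eta> - 1) * (A * D - B * C) = 0" by (simp add: algebra_simps)
    with assms(6,7) show False by simp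
  qed
  with coeffs(1,3) assms(5) show ?thesis by simp
qed

lemma to_ac_affine_relation_trivial:
  assumes "x \<notin> range to_ac" "to_ac u * x + to_ac v = 0"
  shows "u = 0 \<and> v = 0"
proof (cases "u = 0")
  case False
  with assms(2) have "x = to_ac (- v / u)" by (simp add: field_simps eq_neg_iff_add_eq_0)
  with assms(1) show ?thesis by blast
qed (use assms in simp)

definition shares_quadratic_relations :: "'k::field alg_closure \<Rightarrow> 'k alg_closure \<Rightarrow> bool" where
  "shares_quadratic_relations t r \<longleftrightarrow>
     (\<forall>e0 e1 e2. to_ac e2 * t\<^sup>2 + to_ac e1 * t + to_ac e0 = 0
                 \<longrightarrow> to_ac e2 * r\<^sup>2 + to_ac e1 * r + to_ac e0 = 0)"

lemma quadratic_relation_monic: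
  assumes "t \<notin> range to_ac" "to_ac e2 * t\<^sup>2 + to_ac e1 * t + to_ac e0 = 0"
    and "\<not> (e0 = 0 \<and> e1 = 0 \<and> e2 = 0)"
  obtains P S where "t\<^sup>2 = to_ac P * t + to_ac S"
proof -
  have "e2 \<noteq> 0" using assms to_ac_affine_relation_trivial[OF assms(1)] by force
  then have "to_ac e2 * (t\<^sup>2 - (to_ac (- e1 / e2) * t + to_ac (- e0 / e2)))
              = to_ac e2 * t\<^sup>2 + to_ac e1 * t + to_ac e0"
    by (simp add: field_simps)
  with assms(2) \<open>e2 \<noteq> 0\<close> have "t\<^sup>2 = to_ac (- e1 / e2) * t + to_ac (- e0 / e2)" by simp
  then show ?thesis by (rule that)
qed

lemma other_root_shares_quadratic_relations:
  assumes "t \<notin> range to_ac" "t\<^sup>2 = to_ac P * t + to_ac S"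
  shows "shares_quadratic_relations t (to_ac P - t)"
  unfolding shares_quadratic_relations_def
proof (intro allI impI)
  fix e0 e1 e2
  assume "to_ac e2 * t\<^sup>2 + to_ac e1 * t + to_ac e0 = 0"
  with assms(2) have "to_ac (e2 * P + e1) * t + to_ac (e2 * S + e0) = 0"
    by (simp add: algebra_simps)
  with to_ac_affine_relation_trivial[OF assms(1)] have "e2 * P + e1 = 0" "e2 * S + e0 = 0"
    by blast+
  moreover have "to_ac e2 * (to_ac P - t)\<^sup>2 + to_ac e1 * (to_ac P - t) + to_ac e0
      = to_ac (e2 * P + e1) * (to_ac P - t) + to_ac (e2 * S + e0)"
    using assms(2) by (simp add: algebra_simps power2_eq_square)
  ultimately show "to_ac e2 * (to_ac P - t)\<^sup>2 + to_ac e1 * (to_ac P - t) + to_ac e0 = 0" by simp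
qed

lemma common_quadratic_powers:
  assumes "t\<^sup>2 = to_ac P * t + to_ac S" "r\<^sup>2 = to_ac P * r + to_ac S"
  shows "\<exists>u v. t ^ k = to_ac u * t + to_ac v \<and> r ^ k = to_ac u * r + to_ac v"
proof (induction k)
  case 0
  show ?case by (rule exI[of _ 0], rule exI[of _ 1]) simp
next
  case (Suc k)
  then obtain u v where uv: "t ^ k = to_ac u * t + to_ac v" "r ^ k = to_ac u * r + to_ac v"
    by blast
  have "x ^ Suc k = to_ac (u * P + v) * x + to_ac (u * S)"
    if "x ^ k = to_ac u * x + to_ac v" "x\<^sup>2 = to_ac P * x + to_ac S" for x
  proof -
    have "x ^ Suc k = to_ac u * x\<^sup>2 + to_ac v * x"
      using that(1) by (simp add: algebra_simps power2_eq_square)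
    also have "\<dots> = to_ac (u * P + v) * x + to_ac (u * S)"
      using that(2) by (simp add: algebra_simps)
    finally show ?thesis .
  qed
  with uv assms show ?case by blast
qed

lemma other_root_pow_eq:
  assumes "t \<notin> range to_ac" "t\<^sup>2 = to_ac P * t + to_ac S" "t ^ m = to_ac a"
  shows "(to_ac P - t) ^ m = to_ac a"
proof -
  have "(to_ac P - t)\<^sup>2 = to_ac P * (to_ac P - t) + to_ac S"
    using assms(2) by (simp add: power2_eq_square algebra_simps)
  then obtain u v where uv: "t ^ m = to_ac u * t + to_ac v"
      "(to_ac P - t) ^ m = to_ac u * (to_ac P - t) + to_ac v"
    using common_quadratic_powers[OF assms(2)] by blast
  with assms(3) have "to_ac u * t + to_ac (v - a) = 0" by (simp add: algebra_simps)
  then have "u = 0 \<and> v - a = 0" by (rule to_ac_affine_relation_trivial[OF assms(1)])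
  with uv(2) show ?thesis by simp
qed

text \<open>In characteristic 2 the other root coincides with t exactly when t is inseparable, t^2 \<in> K;
  this is excluded because m is then odd, so that t = t^m / (t^2)^((m-1)/2) \<in> K.\<close>

lemma other_root_ne:
  fixes a :: "'k::field"
  assumes "t \<notin> range to_ac" "t\<^sup>2 = to_ac P * t + to_ac S" "t ^ m = to_ac a"
    and "of_nat m \<noteq> (0::'k)"
  shows "to_ac P - t \<noteq> t"
proof
  assume "to_ac P - t = t"
  then have P: "to_ac P = 2 * t" by (simp add: algebra_simps)
  show False
  proof (cases "(2::'k) = 0")
    case False
    then have "(2::'k alg_closure) \<noteq> 0" by (metis to_ac_numeral to_ac_eq_0_iff)
    with P have "t = to_ac (P / 2)" by (simp add: field_simps)
    with assms(1) show False by blast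
  next
    case True
    then have "(2::'k alg_closure) = 0" by (metis to_ac_numeral to_ac_0)
    with P assms(2) have sq: "t\<^sup>2 = to_ac S" by simp
    from True assms(4) have "odd m" by auto
    then obtain k where "m = Suc (2 * k)" by (metis oddE Suc_eq_plus1)
    then have "t ^ m = t * (t\<^sup>2) ^ k" by (simp add: power_mult)
    with sq assms(3) have eq: "t * to_ac (S ^ k) = to_ac a" by simp
    show False
    proof (cases "S ^ k = 0")
      case True
      with eq have "t ^ m = to_ac 0" using assms(3) by simp
      then have "t = to_ac 0" using \<open>m = Suc (2 * k)\<close> by auto
      with assms(1) show False by blast
    next
      case False
      with eq have "t = to_ac (a / S ^ k)" by (simp add: field_simps)
      with assms(1) show False by blast
    qed
  qed
qed

lemma root_notin_range_to_ac:
  assumes "\<not> (\<exists>y. y ^ m = a)" "t ^ m = to_ac a"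
  shows "t \<notin> range to_ac"
proof
  assume "t \<in> range to_ac"
  then obtain y where "t = to_ac y" by blast
  with assms(2) have "to_ac (y ^ m) = to_ac a" by simp
  with assms(1) show False by (simp only: to_ac_eq_iff) blast
qed

lemma exists_conjugate_root:
  fixes a :: "'k::field"
  assumes "m \<ge> 3" "of_nat m \<noteq> (0::'k)"
    and "t ^ m = to_ac a" "t \<notin> range to_ac" "t \<noteq> 0"
  obtains r where "r ^ m = to_ac a" "r \<noteq> t" "shares_quadratic_relations t r"
proof (cases "\<forall>e0 e1 e2. to_ac e2 * t\<^sup>2 + to_ac e1 * t + to_ac e0 = 0 \<longrightarrow> e0 = 0 \<and> e1 = 0 \<and> e2 = 0")
  case True
  have "(of_nat m :: 'k alg_closure) \<noteq> 0" by (metis assms(2) to_ac_of_nat to_ac_eq_0_iff)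
  then obtain \<theta> :: "'k alg_closure" where "\<theta> ^ m = 1" "\<theta> \<noteq> 1"
    using exists_root_of_unity_ne_1[of m] assms(1) by auto
  moreover have "shares_quadratic_relations t (\<theta> * t)"
    unfolding shares_quadratic_relations_def
  proof (intro allI impI)
    fix e0 e1 e2
    assume "to_ac e2 * t\<^sup>2 + to_ac e1 * t + to_ac e0 = 0"
    with True have "e0 = 0 \<and> e1 = 0 \<and> e2 = 0" by blast
    then show "to_ac e2 * (\<theta> * t)\<^sup>2 + to_ac e1 * (\<theta> * t) + to_ac e0 = 0" by simp
  qed
  ultimately show ?thesis using that[of "\<theta> * t"] assms(3,5) by (simp add: power_mult_distrib)
next
  case False
  then obtain P S where "t\<^sup>2 = to_ac P * t + to_ac S"
    using quadratic_relation_monic[OF assms(4)] by blast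
  then show ?thesis
    using that other_root_pow_eq other_root_ne other_root_shares_quadratic_relations assms by blast
qed

definition mobius_fraction :: "'k::field \<Rightarrow> 'k \<Rightarrow> 'k \<Rightarrow> 'k \<Rightarrow> 'k alg_closure \<Rightarrow> 'k alg_closure" where
  "mobius_fraction al be ga de z = (to_ac al * z + to_ac be) / (to_ac ga * z + to_ac de)"

lemma mobius_fraction_ratio_transfer:
  fixes al be ga de :: "'k::field"
  defines "f \<equiv> mobius_fraction al be ga de"
  assumes "shares_quadratic_relations t r"
    and "\<And>z. z \<in> {t, to_ac \<theta> * t, r, to_ac \<theta> * r} \<Longrightarrow> to_ac ga * z + to_ac de \<noteq> 0"
    and "f (to_ac \<theta> * t) = to_ac \<rho> * f t"
  shows "f (to_ac \<theta> * r) = to_ac \<rho> * f r"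
proof -
  have cross: "f (to_ac \<theta> * z) = to_ac \<rho> * f z \<longleftrightarrow>
      to_ac (al * \<theta> * ga - \<rho> * al * ga * \<theta>) * z\<^sup>2
      + to_ac (al * \<theta> * de + be * ga - \<rho> * (al * de + be * ga * \<theta>)) * z
      + to_ac (be * de - \<rho> * be * de) = 0"
    if "to_ac ga * z + to_ac de \<noteq> 0" "to_ac ga * (to_ac \<theta> * z) + to_ac de \<noteq> 0" for z
    using that by (auto simp: f_def mobius_fraction_def field_simps power2_eq_square)
  from assms(2,4) show ?thesis
    using cross[of t] cross[of r] assms(3) unfolding shares_quadratic_relations_def by blast
qed

lemma mobius_fraction_scaling_on_roots:
  fixes al be ga de c d :: "'k::field"
  defines "f \<equiv> mobius_fraction al be ga de"
  assumes "m > 0" "\<forall>z::'k alg_closure. z ^ m = 1 \<longrightarrow> z \<in> range to_ac"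
    and "shares_quadratic_relations t r" "t ^ m = to_ac c" "r ^ m = to_ac c"
    and maps: "\<And>z. z ^ m = to_ac c \<Longrightarrow> to_ac ga * z + to_ac de \<noteq> 0 \<and> f z ^ m = to_ac d"
    and "d \<noteq> 0" "\<theta> ^ m = 1"
  shows "f (\<theta> * r) = (f r / f t) * f (\<theta> * t)"
proof -
  have roots: "(\<theta> * t) ^ m = to_ac c" "(\<theta> * r) ^ m = to_ac c"
    using assms(5,6,9) by (simp_all add: power_mult_distrib)
  have ft: "f t \<noteq> 0" using maps[OF assms(5)] assms(2,8) by (metis to_ac_eq_0_iff zero_power)
  obtain \<theta>' where \<theta>': "\<theta> = to_ac \<theta>'" using assms(3,9) by blast
  define \<rho> where "\<rho> = f (\<theta> * t) / f t"
  have "\<rho> ^ m = 1" using maps[OF roots(1)] maps[OF assms(5)] assms(8)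
    by (simp add: \<rho>_def power_divide)
  then obtain \<rho>' where \<rho>': "\<rho> = to_ac \<rho>'" using assms(3) by blast
  have "f (\<theta> * t) = \<rho> * f t" using ft by (simp add: \<rho>_def)
  then have "f (\<theta> * r) = \<rho> * f r"
    using mobius_fraction_ratio_transfer[OF assms(4)] maps roots assms(5,6)
    unfolding f_def \<theta>' \<rho>' by blast
  then show ?thesis using ft by (simp add: \<rho>_def)
qed

lemma mobius_image_SomeD:
  assumes "mobius al be ga de ` (Some ` A) = Some ` B" "z \<in> A"
  shows "to_ac ga * z + to_ac de \<noteq> 0 \<and> mobius_fraction al be ga de z \<in> B"
proof -
  from assms have "mobius al be ga de (Some z) \<in> Some ` B" by blast
  then show ?thesis by (auto simp: mobius_def mobius_fraction_def split: if_splits)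
qed

lemma cross_products_zero_if_maps_roots:
  fixes al be ga de c d :: "'k::field"
  defines "f \<equiv> mobius_fraction al be ga de"
  assumes "m \<ge> 3" "of_nat m \<noteq> (0::'k alg_closure)"
    and "\<forall>z::'k alg_closure. z ^ m = 1 \<longrightarrow> z \<in> range to_ac"
    and "t ^ m = to_ac c" "r ^ m = to_ac c" "t \<noteq> 0" "r \<noteq> t" "shares_quadratic_relations t r"
    and maps: "\<And>z. z ^ m = to_ac c \<Longrightarrow> to_ac ga * z + to_ac de \<noteq> 0 \<and> f z ^ m = to_ac d"
    and "d \<noteq> 0" "al * de - be * ga \<noteq> 0"
  shows "al * ga = 0 \<and> be * de = 0"
proof -
  define \<eta> where "\<eta> = r / t"
  have "r \<noteq> 0" using assms(2,5-7) by (metis power_not_zero zero_power not_numeral_le_zero gr0I)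
  then have \<eta>: "\<eta> ^ m = 1" "\<eta> \<noteq> 0" "\<eta> \<noteq> 1" "r = \<eta> * t"
    using assms(5-8) by (auto simp: \<eta>_def power_divide)
  obtain \<phi> where \<phi>: "\<phi> ^ m = 1" "\<phi> \<noteq> 1" "\<phi> \<noteq> \<eta>"
    using exists_root_of_unity_ne_1_ne[OF assms(2,3) \<eta>(1,3)] by blast
  have "to_ac al * to_ac ga = 0 \<and> to_ac be * to_ac de = 0"
  proof (rule homography_scaling_at_three_points[where \<zeta> = "f r / f t"])
    fix y assume "y \<in> {t, r, \<phi> * t}"
    then obtain \<theta> where \<theta>: "\<theta> ^ m = 1" "y = \<theta> * t"
      using \<eta> \<phi> by (metis insert_iff mult_1 power_one singletonD)
    then have "y ^ m = to_ac c" "(\<eta> * y) ^ m = to_ac c"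
      using assms(5) \<eta>(1) by (simp_all add: power_mult_distrib)
    moreover have "f (\<eta> * y) = (f r / f t) * f y"
      using mobius_fraction_scaling_on_roots[OF _ assms(4,9,5,6) maps[unfolded f_def] assms(11) \<theta>(1)]
        assms(2) \<theta>(2) \<eta>(4) by (simp add: f_def mult.left_commute)
    ultimately show "to_ac ga * y + to_ac de \<noteq> 0 \<and> to_ac ga * (\<eta> * y) + to_ac de \<noteq> 0 \<and>
        (to_ac al * (\<eta> * y) + to_ac be) / (to_ac ga * (\<eta> * y) + to_ac de)
          = (f r / f t) * ((to_ac al * y + to_ac be) / (to_ac ga * y + to_ac de))"
      using maps by (simp add: f_def mobius_fraction_def)
  qed (use \<eta> \<phi> assms(7,8,12) in \<open>auto simp flip: to_ac_mult to_ac_diff\<close>)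
  then show ?thesis by (simp flip: to_ac_mult)
qed

lemma mobius_diagonal_or_antidiagonal:
  assumes "al * ga = 0" "be * de = 0" "al * de - be * ga \<noteq> 0"
  shows "\<exists>c. c \<noteq> 0 \<and> (mobius al be ga de = mobius c 0 0 1 \<or> mobius al be ga de = mobius 0 c 1 0)"
proof (cases "ga = 0")
  case True
  with assms have "be = 0" "de \<noteq> 0" "al \<noteq> 0" by auto
  with True have "mobius al be ga de = mobius (al / de) 0 0 1"
    by (intro ext, case_tac x) (auto simp: mobius_def field_simps)
  with \<open>al \<noteq> 0\<close> \<open>de \<noteq> 0\<close> show ?thesis by (metis divide_eq_0_iff)
next
  case False
  with assms have "al = 0" "de = 0" "be \<noteq> 0" by auto
  with False have "mobius al be ga de = mobius 0 (be / ga) 1 0"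
    by (intro ext, case_tac x) (auto simp: mobius_def field_simps)
  with \<open>be \<noteq> 0\<close> False show ?thesis by (metis divide_eq_0_iff)
qed

theorem lemma4p2:
  fixes m :: nat and a b al be ga de :: "'k::field"
  assumes "m > 2"
    and "\<not> CHAR('k) dvd m"
    and "\<forall>z::'k alg_closure. z ^ m = 1 \<longrightarrow> z \<in> range to_ac"
    and "a \<noteq> 0" and "\<not> (\<exists>y::'k. y ^ m = a)"
    and "b \<noteq> 0"
    and "al * de - be * ga \<noteq> 0"
    and "mobius al be ga de ` (Some ` {z. z ^ m = to_ac a}) = Some ` {z. z ^ m = to_ac b}"
  shows "\<exists>c::'k. c \<noteq> 0 \<and> (mobius al be ga de = mobius c 0 0 1 \<or> mobius al be ga de = mobius 0 c 1 0)"
proof -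
  have m3: "m \<ge> 3" using assms(1) by simp
  have mK: "of_nat m \<noteq> (0::'k)" using assms(2) by (simp add: of_nat_eq_0_iff_char_dvd)
  then have mL: "of_nat m \<noteq> (0::'k alg_closure)" by (metis to_ac_of_nat to_ac_eq_0_iff)
  obtain t where t: "t ^ m = to_ac a" using nth_root_exists[of m "to_ac a"] m3 by auto
  have "t \<noteq> 0" using t assms(4) m3 by (auto simp: power_0_left)
  obtain r where r: "r ^ m = to_ac a" "r \<noteq> t" "shares_quadratic_relations t r"
    using exists_conjugate_root[OF m3 mK t root_notin_range_to_ac[OF assms(5) t] \<open>t \<noteq> 0\<close>] .
  have maps: "to_ac ga * z + to_ac de \<noteq> 0 \<and> mobius_fraction al be ga de z ^ m = to_ac b"
    if "z ^ m = to_ac a" for z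
    using mobius_image_SomeD[OF assms(8)] that by simp
  have "al * ga = 0 \<and> be * de = 0"
    by (rule cross_products_zero_if_maps_roots[OF m3 mL assms(3) t r(1) \<open>t \<noteq> 0\<close> r(2,3) maps assms(6,7)])
  then show ?thesis using mobius_diagonal_or_antidiagonal assms(7) by blast
qed

end
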